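(* Let $t$ be the left-hand side of a CRS rule following Barendregt's naming convention, and let $\mathit{Left}(t)=(\Delta,t')$. Then $\Delta\vdash t'$ is a closed nominal term-in-context.
   Context: CRSs: meta-terms $a\mid Z(t_1,\dots,t_n)\mid[a]t\mid f\,t\mid(t_1,\dots,t_n)$ over variables (identified with nominal atoms), meta-variables $Z$ with arities and function symbols. The left-hand side $l$ of a CRS rule is a closed meta-term (no free variables) of the form $f(s_1,\dots,s_n)$ in which every meta-variable occurs only as $Z(a_1,\dots,a_n)$ with pairwise distinct bound variables. Barendregt's convention: bound variables are pairwise distinct and distinct from free variables. Nominal terms: $a\mid\pi\cdot X\mid[a]s\mid f\,s\mid(s_1,\dots,s_n)$ with finite-support permutations $\pi$; freshness contexts are sets of $a\#X$. $\Delta\vdash t$ is closed if: (1) every atom occurrence $a$ in $t$ lies under an abstraction $[a]$; (2) if $\pi\cdot X$ is in the scope of an abstraction of $\pi(a)$ then every occurrence $\pi'\cdot X$ of $X$ in $t$ is in the scope of an abstraction of $\pi'(a)$, or $a\#X\in\Delta$; (3) for two occurrences $\pi_1\cdot X,\pi_2\cdot X$ and $a$ with $\pi_1(a)\neq\pi_2(a)$, if $a$ is not abstracted in one of the occurrences then $a\#X\in\Delta$. Translation: $\Phi_t(Z)=[a_1,\dots,a_n]$ if $Z(a_1,\dots,a_n)$ is the leftmost occurrence of $Z$ in $t$. For lists of distinct variables $[a_1,\dots,a_n],[b_1,\dots,b_n]$, $\Psi([a_1,\ldots,a_n],[b_1,\dots,b_n])$ is a permutation (list of swappings) $\pi$ with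 $\pi(a_k)=b_k$ for all $k$, obtained by closing each maximal chain of the injection $a_k\mapsto b_k$ into a cycle $(c_1,\dots,c_m)$ and decomposing it as $(c_1\ c_m)\cdots(c_1\ c_2)$. $\mathit{Left}(t)=(\Delta,t')$: $t'$ is $t$ with the leftmost occurrence of each $Z(a_1,\ldots,a_n)$ replaced by the nominal variable $Z$ and every other occurrence $Z(b_1,\dots,b_n)$ replaced by $\Psi(\Phi_t(Z),[b_1,\dots,b_n])\cdot Z$, all other constructs kept unchanged; $\Delta$ contains $b\#Z$ for every occurrence of $Z$ in $t$ and every variable $b$ abstracted above that occurrence with $b\notin\Phi_t(Z)$. *)

theory Defs
  imports Main
begin

text \<open>Atoms (= CRS variables) have type 'a, meta-variables / nominal unknowns type 'v,
function symbols type 'f.  A permutation is a list of swappings; the list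
[s1, ..., sk] denotes the composition s1 o ... o sk (the rightmost swapping acts first).\<close>

type_synonym 'a perm = "('a \<times> 'a) list"

definition swap_atom :: "'a \<times> 'a \<Rightarrow> 'a \<Rightarrow> 'a" where
  "swap_atom s c = (if c = fst s then snd s else if c = snd s then fst s else c)"

definition perm_apply :: "'a perm \<Rightarrow> 'a \<Rightarrow> 'a" where
  "perm_apply \<pi> c = foldr swap_atom \<pi> c"

datatype ('a, 'v, 'f) mterm =
    MVar 'a
  | MMeta 'v "('a, 'v, 'f) mterm list"
  | MAbs 'a "('a, 'v, 'f) mterm"
  | MFun 'f "('a, 'v, 'f) mterm"
  | MTup "('a, 'v, 'f) mterm list"

fun fvm :: "('a, 'v, 'f) mterm \<Rightarrow> 'a set" where
  "fvm (MVar a) = {a}"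
| "fvm (MMeta Z ts) = (\<Union>t\<in>set ts. fvm t)"
| "fvm (MAbs a t) = fvm t - {a}"
| "fvm (MFun f t) = fvm t"
| "fvm (MTup ts) = (\<Union>t\<in>set ts. fvm t)"

fun binders :: "('a, 'v, 'f) mterm \<Rightarrow> 'a list" where
  "binders (MVar a) = []"
| "binders (MMeta Z ts) = concat (map binders ts)"
| "binders (MAbs a t) = a # binders t"
| "binders (MFun f t) = binders t"
| "binders (MTup ts) = concat (map binders ts)"

fun meta_ok :: "('v \<Rightarrow> nat) \<Rightarrow> ('a, 'v, 'f) mterm \<Rightarrow> bool" where
  "meta_ok ar (MVar a) = True"
| "meta_ok ar (MMeta Z ts) =
     (\<exists>as. ts = map MVar as \<and> distinct as \<and> length as = ar Z)"
| "meta_ok ar (MAbs a t) = meta_ok ar t"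
| "meta_ok ar (MFun f t) = meta_ok ar t"
| "meta_ok ar (MTup ts) = (\<forall>t\<in>set ts. meta_ok ar t)"

text \<open>Left-hand side of a CRS rule (meta-variables with arity function ar).
 Closedness of the meta-term makes every argument variable of a meta-variable
 occurrence bound.\<close>
definition crs_lhs :: "('v \<Rightarrow> nat) \<Rightarrow> ('a, 'v, 'f) mterm \<Rightarrow> bool" where
  "crs_lhs ar t \<longleftrightarrow> fvm t = {} \<and> (\<exists>f ss. t = MFun f (MTup ss)) \<and> meta_ok ar t"

definition barendregt :: "('a, 'v, 'f) mterm \<Rightarrow> bool" where
  "barendregt t \<longleftrightarrow> distinct (binders t) \<and> set (binders t) \<inter> fvm t = {}"

datatype ('a, 'v, 'f) nterm =
    NAtom 'a
  | NSusp "'a perm" 'v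
  | NAbs 'a "('a, 'v, 'f) nterm"
  | NFun 'f "('a, 'v, 'f) nterm"
  | NTup "('a, 'v, 'f) nterm list"

text \<open>Freshness context: a set of pairs (a, X) standing for a # X.\<close>
type_synonym ('a, 'v) fctx = "('a \<times> 'v) set"

fun atom_occs :: "'a list \<Rightarrow> ('a, 'v, 'f) nterm \<Rightarrow> ('a \<times> 'a list) list" where
  "atom_occs bs (NAtom a) = [(a, bs)]"
| "atom_occs bs (NSusp \<pi> X) = []"
| "atom_occs bs (NAbs a t) = atom_occs (bs @ [a]) t"
| "atom_occs bs (NFun f t) = atom_occs bs t"
| "atom_occs bs (NTup ts) = concat (map (atom_occs bs) ts)"

fun susp_occs :: "'a list \<Rightarrow> ('a, 'v, 'f) nterm \<Rightarrow> ('a perm \<times> 'v \<times> 'a list) list" where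
  "susp_occs bs (NAtom a) = []"
| "susp_occs bs (NSusp \<pi> X) = [(\<pi>, X, bs)]"
| "susp_occs bs (NAbs a t) = susp_occs (bs @ [a]) t"
| "susp_occs bs (NFun f t) = susp_occs bs t"
| "susp_occs bs (NTup ts) = concat (map (susp_occs bs) ts)"

definition closed_nom :: "('a, 'v) fctx \<Rightarrow> ('a, 'v, 'f) nterm \<Rightarrow> bool" where
  "closed_nom \<Delta> t \<longleftrightarrow>
     (\<forall>(a, bs) \<in> set (atom_occs [] t). a \<in> set bs) \<and>
     (\<forall>(\<pi>, X, bs) \<in> set (susp_occs [] t). \<forall>a. perm_apply \<pi> a \<in> set bs \<longrightarrow>
        (\<forall>(\<pi>', X', bs') \<in> set (susp_occs [] t). X' = X \<longrightarrow>
            perm_apply \<pi>' a \<in> set bs' \<or> (a, X) \<in> \<Delta>)) \<and>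
     (\<forall>(\<pi>1, X1, bs1) \<in> set (susp_occs [] t). \<forall>(\<pi>2, X2, bs2) \<in> set (susp_occs [] t).
        \<forall>a. X1 = X2 \<longrightarrow> perm_apply \<pi>1 a \<noteq> perm_apply \<pi>2 a \<longrightarrow>
          (perm_apply \<pi>1 a \<notin> set bs1 \<or> perm_apply \<pi>2 a \<notin> set bs2) \<longrightarrow> (a, X1) \<in> \<Delta>)"

text \<open>Follow the injection f from c, stopping at the end of the chain or when the
 starting point c0 is reached again (cycle); n is fuel.\<close>
fun chain :: "('a \<Rightarrow> 'a option) \<Rightarrow> nat \<Rightarrow> 'a \<Rightarrow> 'a \<Rightarrow> 'a list" where
  "chain f 0 c0 c = [c]"
| "chain f (Suc n) c0 c =
     c # (case f c of None \<Rightarrow> [] | Some d \<Rightarrow> if d = c0 then [] else chain f n c0 d)"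

text \<open>The cycle (c1, ..., cm) as the list of swappings (c1 cm) ... (c1 c2).\<close>
fun cycle_swaps :: "'a list \<Rightarrow> 'a perm" where
  "cycle_swaps [] = []"
| "cycle_swaps (c1 # cs) = map (\<lambda>c. (c1, c)) (rev cs)"

fun psi_aux :: "('a \<Rightarrow> 'a option) \<Rightarrow> nat \<Rightarrow> 'a list \<Rightarrow> 'a set \<Rightarrow> 'a perm" where
  "psi_aux f n [] vis = []"
| "psi_aux f n (a # rest) vis =
     (if a \<in> vis then psi_aux f n rest vis
      else (let ch = chain f n a a in cycle_swaps ch @ psi_aux f n rest (vis \<union> set ch)))"

text \<open>Psi(as, bs): close each maximal chain of the injection as!k -> bs!k into a cycle
 and decompose it.  Maximal chains start at the elements of as not in bs; they are
 processed first, then the remaining (already cyclic) components.\<close>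
definition Psi :: "'a list \<Rightarrow> 'a list \<Rightarrow> 'a perm" where
  "Psi as bs = psi_aux (map_of (zip as bs)) (length as)
      (filter (\<lambda>a. a \<notin> set bs) as @ filter (\<lambda>a. a \<in> set bs) as) {}"

fun get_var :: "('a, 'v, 'f) mterm \<Rightarrow> 'a" where
  "get_var (MVar a) = a"
| "get_var _ = undefined"

fun meta_occs :: "'a list \<Rightarrow> ('a, 'v, 'f) mterm \<Rightarrow> ('v \<times> 'a list \<times> 'a list) list" where
  "meta_occs bs (MVar a) = []"
| "meta_occs bs (MMeta Z ts) = (Z, map get_var ts, bs) # concat (map (meta_occs bs) ts)"
| "meta_occs bs (MAbs a t) = meta_occs (bs @ [a]) t"
| "meta_occs bs (MFun f t) = meta_occs bs t"
| "meta_occs bs (MTup ts) = concat (map (meta_occs bs) ts)"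

definition Phi :: "('a, 'v, 'f) mterm \<Rightarrow> 'v \<Rightarrow> 'a list" where
  "Phi t Z = (case find (\<lambda>(Z', _, _). Z' = Z) (meta_occs [] t) of
                Some (_, as, _) \<Rightarrow> as | None \<Rightarrow> [])"

text \<open>Every occurrence Z(b1..bn) becomes Psi(Phi Z, [b1..bn]).Z.  For the leftmost
 occurrence Psi(Phi Z, Phi Z) is the empty list of swappings, i.e. the occurrence
 becomes the plain unknown Z = id.Z.\<close>
fun to_nom :: "('v \<Rightarrow> 'a list) \<Rightarrow> ('a, 'v, 'f) mterm \<Rightarrow> ('a, 'v, 'f) nterm" where
  "to_nom \<Phi> (MVar a) = NAtom a"
| "to_nom \<Phi> (MMeta Z ts) = NSusp (Psi (\<Phi> Z) (map get_var ts)) Z"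
| "to_nom \<Phi> (MAbs a t) = NAbs a (to_nom \<Phi> t)"
| "to_nom \<Phi> (MFun f t) = NFun f (to_nom \<Phi> t)"
| "to_nom \<Phi> (MTup ts) = NTup (map (to_nom \<Phi>) ts)"

definition Left :: "('a, 'v, 'f) mterm \<Rightarrow> ('a, 'v) fctx \<times> ('a, 'v, 'f) nterm" where
  "Left t =
     ({(b, Z) | b Z as bs. (Z, as, bs) \<in> set (meta_occs [] t) \<and> b \<in> set bs \<and> b \<notin> set (Phi t Z)},
      to_nom (Phi t) t)"

end

theory Submission
  imports Defs
begin

text \<open>Write \<open>f\<close> for the injection \<open>a\<^sub>k \<mapsto> b\<^sub>k\<close> underlying \<open>Psi([a\<^sub>1..a\<^sub>n], [b\<^sub>1..b\<^sub>n])\<close>.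
  Its orbits are maximal chains and cycles, and the swappings \<open>(c\<^sub>1 c\<^sub>m)\<dots>(c\<^sub>1 c\<^sub>2)\<close>
  produced for an orbit \<open>c\<^sub>1, \<dots>, c\<^sub>m\<close> move each \<open>c\<^sub>i\<close> to its successor; since the
  orbits are disjoint, \<open>Psi\<close> sends every \<open>a\<^sub>k\<close> to \<open>b\<^sub>k\<close> and fixes all atoms outside
  \<open>{a\<^sub>k} \<union> {b\<^sub>k}\<close>. Once the chains have been processed, every atom of \<open>dom f\<close> not yet
  visited lies on a cycle, as \<open>f\<close> then maps the unvisited part of \<open>dom f\<close> bijectively onto
  the unvisited part of \<open>ran f\<close>.

  For the translation, let \<open>Z(a\<^sub>1..a\<^sub>n)\<close> be the leftmost occurrence of \<open>Z\<close>. In a closed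
  left-hand side the arguments of each occurrence \<open>Z(b\<^sub>1..b\<^sub>n)\<close> are abstracted above it.
  Hence an atom \<open>a\<^sub>k\<close> becomes a bound atom \<open>b\<^sub>k\<close> at every occurrence, whereas an atom
  outside \<open>{a\<^sub>k}\<close> that is bound or moved at some occurrence is itself bound there, so
  \<open>Left\<close> has put it into \<open>\<Delta>\<close> as fresh for \<open>Z\<close>. These two facts are exactly the
  closedness conditions on suspensions.\<close>

lemma perm_apply_Nil [simp]: "perm_apply [] c = c"
  by (simp add: perm_apply_def)

lemma perm_apply_Cons [simp]: "perm_apply (s # \<pi>) c = swap_atom s (perm_apply \<pi> c)"
  by (simp add: perm_apply_def)

lemma perm_apply_append: "perm_apply (\<pi> @ \<sigma>) c = perm_apply \<pi> (perm_apply \<sigma> c)"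
  by (simp add: perm_apply_def)

lemma perm_apply_fresh: "(\<And>s. s \<in> set \<pi> \<Longrightarrow> c \<noteq> fst s \<and> c \<noteq> snd s) \<Longrightarrow> perm_apply \<pi> c = c"
  by (induction \<pi>) (auto simp: swap_atom_def)

lemma perm_apply_cycle_swaps_fresh: "c \<notin> set cs \<Longrightarrow> perm_apply (cycle_swaps cs) c = c"
  by (cases cs) (auto intro!: perm_apply_fresh)

lemma perm_apply_cycle_swaps:
  "distinct (c # cs) \<Longrightarrow> i \<le> length cs \<Longrightarrow>
    perm_apply (cycle_swaps (c # cs)) ((c # cs) ! i) = (cs @ [c]) ! i"
proof (induction cs arbitrary: i rule: rev_induct)
  case Nil
  then show ?case by simp
next
  case (snoc d ds)
  have swaps: "cycle_swaps (c # ds @ [d]) = (c, d) # cycle_swaps (c # ds)"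
    by simp
  consider "i \<le> length ds" | "i = Suc (length ds)"
    using snoc.prems(2) by fastforce
  then show ?case
  proof cases
    case 1
    have "perm_apply (cycle_swaps (c # ds)) ((c # ds) ! i) = (ds @ [c]) ! i"
      using snoc 1 by simp
    moreover have "(c # ds @ [d]) ! i = (c # ds) ! i"
      using 1 by (simp add: nth_append nth_Cons split: nat.split)
    moreover have "ds ! i \<noteq> c \<and> ds ! i \<noteq> d" if "i < length ds"
      using snoc.prems(1) that nth_mem by fastforce
    ultimately show ?thesis
      using 1 snoc.prems(1) by (auto simp: swaps nth_append swap_atom_def)
  next
    case 2
    have "d \<notin> set (c # ds)"
      using snoc.prems(1) by auto
    then have "perm_apply (cycle_swaps (c # ds)) d = d"
      by (rule perm_apply_cycle_swaps_fresh)
    then show ?thesis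
      using 2 by (simp only: swaps) (simp add: nth_append swap_atom_def)
  qed
qed

definition is_path :: "('a \<Rightarrow> 'a option) \<Rightarrow> 'a list \<Rightarrow> bool" where
  "is_path f xs \<longleftrightarrow> (\<forall>i. Suc i < length xs \<longrightarrow> f (xs ! i) = Some (xs ! Suc i))"

definition enumerates_orbit :: "('a \<Rightarrow> 'a option) \<Rightarrow> 'a list \<Rightarrow> bool" where
  "enumerates_orbit f xs \<longleftrightarrow> xs \<noteq> [] \<and> is_path f xs \<and>
     (f (last xs) = Some (hd xs) \<or> f (last xs) = None \<and> hd xs \<notin> ran f)"

definition orbit_closed :: "('a \<Rightarrow> 'a option) \<Rightarrow> 'a set \<Rightarrow> bool" where
  "orbit_closed f V \<longleftrightarrow> (\<forall>c d. f c = Some d \<longrightarrow> (c \<in> V \<longleftrightarrow> d \<in> V))"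

definition realises_on :: "('a \<Rightarrow> 'a option) \<Rightarrow> 'a perm \<Rightarrow> 'a set \<Rightarrow> bool" where
  "realises_on f \<pi> S \<longleftrightarrow> (\<forall>c. c \<notin> S \<longrightarrow> perm_apply \<pi> c = c) \<and>
     (\<forall>c\<in>S. \<forall>d. f c = Some d \<longrightarrow> d \<in> S \<and> perm_apply \<pi> c = d)"

lemma realises_on_append:
  assumes "realises_on f \<pi> S" "realises_on f \<sigma> T" "S \<inter> T = {}"
  shows "realises_on f (\<pi> @ \<sigma>) (S \<union> T)"
  using assms unfolding realises_on_def perm_apply_append by (metis Un_iff disjoint_iff)

lemma is_path_last_or_next:
  assumes "is_path f xs" "i < length xs" "f (xs ! i) = Some d"
  shows "Suc i < length xs \<and> d = xs ! Suc i \<or> Suc i = length xs \<and> xs ! i = last xs"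
proof (cases "Suc i < length xs")
  case False
  then have "i = length xs - 1" "xs \<noteq> []" using assms(2) by auto
  then show ?thesis by (simp add: last_conv_nth)
qed (use assms in \<open>auto simp: is_path_def\<close>)

lemma is_path_subset_ran:
  assumes "is_path f xs"
  shows "set (tl xs) \<subseteq> ran f"
proof
  fix x assume "x \<in> set (tl xs)"
  then obtain j where "j < length (tl xs)" "x = tl xs ! j"
    by (auto simp: in_set_conv_nth)
  then have "Suc j < length xs" "x = xs ! Suc j" by (simp_all add: nth_tl)
  then show "x \<in> ran f" using assms by (auto simp: is_path_def ran_def)
qed

lemma is_path_avoids:
  assumes "is_path f xs" "orbit_closed f V" "xs \<noteq> []" "hd xs \<notin> V"
  shows "set xs \<inter> V = {}"
proof -
  have "xs ! i \<notin> V" if "i < length xs" for i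
    using that
  proof (induction i)
    case 0
    then show ?case using assms(3,4) by (simp add: hd_conv_nth)
  next
    case (Suc i)
    then show ?case using assms(1,2) unfolding is_path_def orbit_closed_def by auto
  qed
  then show ?thesis by (auto simp: in_set_conv_nth)
qed

lemma is_path_distinct:
  assumes inj: "inj_on f (dom f)" and path: "is_path f xs" and "hd xs \<notin> set (tl xs)"
  shows "distinct xs"
proof -
  have "xs ! i \<noteq> xs ! j" if "i < j" "j < length xs" for i j
    using that
  proof (induction i arbitrary: j)
    case 0
    then have "xs ! j \<in> set (tl xs)"
      by (auto simp: in_set_conv_nth nth_tl intro!: exI[of _ "j - 1"])
    moreover have "hd xs = xs ! 0" using 0 by (cases xs) auto
    ultimately show ?case using assms(3) by auto
  next
    case (Suc i)
    then obtain j' where j: "j = Suc j'" by (cases j) auto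
    have "f (xs ! i) = Some (xs ! Suc i)" "f (xs ! j') = Some (xs ! j)"
      using path Suc.prems j unfolding is_path_def by auto
    then show ?case
      using Suc.IH[of j'] Suc.prems j inj by (auto simp: inj_on_def domI)
  qed
  then show ?thesis by (metis distinct_conv_nth linorder_neqE_nat)
qed

lemma enumerates_orbit_closed:
  assumes inj: "inj_on f (dom f)" and orb: "enumerates_orbit f xs"
  shows "orbit_closed f (set xs)"
proof -
  have ne: "xs \<noteq> []" and path: "is_path f xs"
    and last: "f (last xs) = Some (hd xs) \<or> f (last xs) = None \<and> hd xs \<notin> ran f"
    using orb by (simp_all add: enumerates_orbit_def)
  have forward: "d \<in> set xs" if c: "c \<in> set xs" and fc: "f c = Some d" for c d
  proof -
    obtain i where i: "i < length xs" "c = xs ! i"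
      using c by (auto simp: in_set_conv_nth)
    then show ?thesis
      using is_path_last_or_next[OF path i(1), of d] fc last hd_in_set[OF ne] by auto
  qed
  have backward: "c \<in> set xs" if d: "d \<in> set xs" and fc: "f c = Some d" for c d
  proof -
    obtain i where i: "i < length xs" "d = xs ! i"
      using d by (auto simp: in_set_conv_nth)
    show ?thesis
    proof (cases i)
      case 0
      then have "d = hd xs" using i ne by (simp add: hd_conv_nth)
      then have "f (last xs) = Some d" using last fc by (auto simp: ran_def)
      then have "c = last xs" using fc inj by (auto simp: inj_on_def domI)
      then show ?thesis using ne by simp
    next
      case (Suc j)
      then have "f (xs ! j) = Some d" using i path by (simp add: is_path_def)
      then have "c = xs ! j" using fc inj by (auto simp: inj_on_def domI)
      then show ?thesis using i Suc by simp
    qed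
  qed
  show ?thesis unfolding orbit_closed_def using forward backward by meson
qed

lemma cycle_swaps_realises:
  assumes dist: "distinct xs" and orb: "enumerates_orbit f xs"
  shows "realises_on f (cycle_swaps xs) (set xs)"
proof -
  obtain c cs where xs: "xs = c # cs"
    using orb by (cases xs) (auto simp: enumerates_orbit_def)
  have path: "is_path f xs" and last: "f (last xs) = Some c \<or> f (last xs) = None"
    using orb by (auto simp: enumerates_orbit_def xs)
  have "d \<in> set xs \<and> perm_apply (cycle_swaps xs) x = d"
    if x: "x \<in> set xs" and fx: "f x = Some d" for x d
  proof -
    obtain i where i: "i < length xs" "x = xs ! i"
      using x by (auto simp: in_set_conv_nth)
    have "distinct (c # cs)" "i \<le> length cs"
      using dist i(1) by (simp_all add: xs)
    then have perm: "perm_apply (cycle_swaps xs) x = (cs @ [c]) ! i"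
      unfolding i(2) xs by (rule perm_apply_cycle_swaps)
    from is_path_last_or_next[OF path i(1), of d] fx i(2)
    consider "Suc i < length xs" "d = xs ! Suc i" | "Suc i = length xs" "x = last xs"
      by auto
    then show ?thesis
    proof cases
      case 1
      then show ?thesis using perm by (simp add: xs nth_append)
    next
      case 2
      then have "d = c" using last fx by auto
      then show ?thesis using perm 2 by (simp add: xs)
    qed
  qed
  then show ?thesis
    unfolding realises_on_def using perm_apply_cycle_swaps_fresh[of _ xs] by auto
qed

lemma chain_not_Nil: "chain f n c0 c \<noteq> []"
  by (cases n) auto

lemma hd_chain: "hd (chain f n c0 c) = c"
  by (cases n) auto

lemma chain_is_path: "is_path f (chain f n c0 c)"
  unfolding is_path_def
proof (induction n arbitrary: c)
  case (Suc n)
  show ?case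
  proof (intro allI impI)
    fix i assume i: "Suc i < length (chain f (Suc n) c0 c)"
    then obtain d where d: "f c = Some d" "d \<noteq> c0" "chain f (Suc n) c0 c = c # chain f n c0 d"
      by (auto split: option.splits if_splits)
    show "f (chain f (Suc n) c0 c ! i) = Some (chain f (Suc n) c0 c ! Suc i)"
      using Suc.IH[of d] i d hd_chain[of f n c0 d] chain_not_Nil[of f n c0 d]
      by (cases i) (auto simp: hd_conv_nth)
  qed
qed simp

lemma chain_start_notin_tl: "c0 \<notin> set (tl (chain f n c0 c))"
proof (induction n arbitrary: c)
  case (Suc n)
  have "c0 \<notin> set (chain f n c0 d)" if "d \<noteq> c0" for d
    using Suc.IH[of d] that hd_chain[of f n c0 d] chain_not_Nil[of f n c0 d]
    by (metis list.collapse set_ConsD)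
  then show ?case by (auto split: option.splits)
qed simp

lemma chain_end:
  "f (last (chain f n c0 c)) \<in> {None, Some c0} \<or> length (chain f n c0 c) = Suc n"
proof (induction n arbitrary: c)
  case (Suc n)
  then show ?case
    using chain_not_Nil[of f n c0] by (auto split: option.splits)
qed simp

lemma chain_end_within_fuel:
  assumes "distinct (chain f n c0 c)" "finite (dom f)" "card (dom f) \<le> n"
  shows "f (last (chain f n c0 c)) \<in> {None, Some c0}"
proof (rule ccontr)
  let ?ch = "chain f n c0 c"
  assume open_end: "f (last ?ch) \<notin> {None, Some c0}"
  then have len: "length ?ch = Suc n" using chain_end[of f n c0 c] by auto
  have "set ?ch \<subseteq> dom f"
  proof
    fix x assume "x \<in> set ?ch"
    then obtain i where i: "i < length ?ch" "x = ?ch ! i" by (auto simp: in_set_conv_nth)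
    show "x \<in> dom f"
    proof (cases "Suc i < length ?ch")
      case True
      then show ?thesis using chain_is_path[of f n c0 c] i by (auto simp: is_path_def)
    next
      case False
      then have "i = length ?ch - 1" using i(1) by simp
      then have "x = last ?ch" using i(2) chain_not_Nil[of f n c0 c] by (simp add: last_conv_nth)
      then show ?thesis using open_end by auto
    qed
  qed
  then have "card (set ?ch) \<le> card (dom f)" by (rule card_mono[OF assms(2)])
  moreover have "card (set ?ch) = Suc n" using assms(1) len by (simp add: distinct_card)
  ultimately show False using assms(3) by simp
qed

lemma chain_enumerates_orbit:
  assumes inj: "inj_on f (dom f)" and fin: "finite (dom f)" and card: "card (dom f) \<le> n"
    and a: "a \<in> dom f" "a \<notin> V" and V: "orbit_closed f V"
    and start: "a \<notin> ran f \<or> ran f - V \<subseteq> dom f"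
  shows "distinct (chain f n a a) \<and> enumerates_orbit f (chain f n a a) \<and> set (chain f n a a) \<inter> V = {}"
proof -
  let ?ch = "chain f n a a"
  have path: "is_path f ?ch" and ne: "?ch \<noteq> []" and hd: "hd ?ch = a"
    by (simp_all add: chain_is_path chain_not_Nil hd_chain)
  have dist: "distinct ?ch"
    using is_path_distinct[OF inj path] chain_start_notin_tl[of a f n a] hd by simp
  have avoid: "set ?ch \<inter> V = {}"
    using is_path_avoids[OF path V ne] hd a by simp
  have last_step: "f (last ?ch) \<in> {None, Some a}"
    using chain_end_within_fuel[OF dist fin card] .
  have closes: "f (last ?ch) = Some a" if "a \<in> ran f"
  proof -
    have "last ?ch \<in> dom f"
    proof (cases "last ?ch = a")
      case False
      then have "tl ?ch \<noteq> []" using ne hd by (metis last_ConsL list.collapse)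
      then have "last ?ch \<in> set (tl ?ch)" by (metis last_in_set last_tl)
      then show ?thesis
        using is_path_subset_ran[OF path] avoid start that last_in_set[OF ne] by blast
    qed (use a in simp)
    then show ?thesis using last_step by auto
  qed
  moreover have "f (last ?ch) = Some (hd ?ch) \<or> f (last ?ch) = None \<and> hd ?ch \<notin> ran f"
    using last_step closes hd by auto
  ultimately show ?thesis using dist avoid path ne by (simp add: enumerates_orbit_def)
qed

fun visited_after :: "('a \<Rightarrow> 'a option) \<Rightarrow> nat \<Rightarrow> 'a list \<Rightarrow> 'a set \<Rightarrow> 'a set" where
  "visited_after f n [] vis = vis"
| "visited_after f n (a # rest) vis =
     (if a \<in> vis then visited_after f n rest vis
      else visited_after f n rest (vis \<union> set (chain f n a a)))"

lemma psi_aux_append: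
  "psi_aux f n (L @ M) vis = psi_aux f n L vis @ psi_aux f n M (visited_after f n L vis)"
  by (induction L arbitrary: vis) (auto simp: Let_def)

(* An unvisited start either has no preimage and begins a maximal chain, or all unvisited
   orbits are already cycles. *)
lemma psi_aux_realises:
  assumes inj: "inj_on f (dom f)" and fin: "finite (dom f)" and card: "card (dom f) \<le> n"
    and "orbit_closed f vis"
    and "\<forall>a\<in>set L. a \<in> dom f \<and> (a \<notin> vis \<longrightarrow> a \<notin> ran f \<or> ran f - vis \<subseteq> dom f)"
  shows "realises_on f (psi_aux f n L vis) (visited_after f n L vis - vis) \<and>
    vis \<union> set L \<subseteq> visited_after f n L vis \<and> orbit_closed f (visited_after f n L vis) \<and>
    visited_after f n L vis \<subseteq> vis \<union> dom f \<union> ran f"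
  using assms(4,5)
proof (induction L arbitrary: vis)
  case Nil
  then show ?case by (auto simp: realises_on_def)
next
  case (Cons a L)
  show ?case
  proof (cases "a \<in> vis")
    case True
    then show ?thesis using Cons by auto
  next
    case False
    let ?ch = "chain f n a a"
    let ?vis' = "vis \<union> set ?ch"
    have a: "a \<in> dom f" "a \<notin> ran f \<or> ran f - vis \<subseteq> dom f"
      using Cons.prems(2) False by auto
    have ch: "distinct ?ch" "enumerates_orbit f ?ch" "set ?ch \<inter> vis = {}"
      using chain_enumerates_orbit[OF inj fin card a(1) False Cons.prems(1) a(2)] by auto
    have closed': "orbit_closed f ?vis'"
      using Cons.prems(1) enumerates_orbit_closed[OF inj ch(2)] by (auto simp: orbit_closed_def)
    have "\<forall>b\<in>set L. b \<in> dom f \<and> (b \<notin> ?vis' \<longrightarrow> b \<notin> ran f \<or> ran f - ?vis' \<subseteq> dom f)"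
      using Cons.prems(2) by auto
    note IH = Cons.IH[OF closed' this]
    let ?V = "visited_after f n L ?vis'"
    have sub: "set ?ch \<subseteq> dom f \<union> ran f"
      using is_path_subset_ran[of f ?ch] hd_chain[of f n a a] a(1) ch(2)
      by (cases ?ch) (auto simp: enumerates_orbit_def)
    have "realises_on f (cycle_swaps ?ch @ psi_aux f n L ?vis') (set ?ch \<union> (?V - ?vis'))"
      by (rule realises_on_append[OF cycle_swaps_realises[OF ch(1,2)]]) (use IH in auto)
    moreover have "set ?ch \<union> (?V - ?vis') = ?V - vis"
      using IH ch(3) by auto
    moreover have "a \<in> set ?ch"
      using hd_chain[of f n a a] chain_not_Nil[of f n a a] by (metis list.set_sel(1))
    ultimately show ?thesis
      using False IH sub by (auto simp: Let_def)
  qed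
qed

lemma ran_diff_subset_dom:
  assumes inj: "inj_on f (dom f)" and fin: "finite (dom f)"
    and V: "orbit_closed f V" and sources: "dom f - ran f \<subseteq> V"
  shows "ran f - V \<subseteq> dom f"
proof -
  let ?D = "dom f - V" and ?R = "ran f - V"
  have "(\<lambda>c. the (f c)) ` ?D = ?R"
    using V by (force simp: orbit_closed_def ran_def image_iff)
  moreover have "inj_on (\<lambda>c. the (f c)) ?D"
    using inj by (force simp: inj_on_def dom_def)
  ultimately have "card ?R = card ?D"
    using card_image by metis
  moreover have "?D \<subseteq> ?R" using sources by auto
  moreover have "finite ?R"
    using fin finite_ran by blast
  ultimately have "?D = ?R" using card_seteq by (metis order_refl)
  then show ?thesis by blast
qed

lemma Psi_realises:
  assumes das: "distinct as" and dbs: "distinct bs" and len: "length as = length bs"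
  shows "realises_on (map_of (zip as bs)) (Psi as bs) (set as \<union> set bs)"
proof -
  let ?f = "map_of (zip as bs)" and ?n = "length as"
  let ?sources = "filter (\<lambda>a. a \<notin> set bs) as" and ?rest = "filter (\<lambda>a. a \<in> set bs) as"
  have dom: "dom ?f = set as" using len by simp
  have ran: "ran ?f = set bs" using len das by (rule ran_map_of_zip)
  have inj: "inj_on ?f (dom ?f)"
  proof (rule inj_onI)
    fix x y assume "x \<in> dom ?f" "y \<in> dom ?f" "?f x = ?f y"
    then obtain i j where "i < ?n" "j < ?n" "x = as ! i" "y = as ! j" "bs ! i = bs ! j"
      using map_of_zip_nth[OF len das] len by (auto simp: dom in_set_conv_nth)
    then show "x = y" using dbs len by (simp add: nth_eq_iff_index_eq)
  qed
  have fin: "finite (dom ?f)" and card: "card (dom ?f) \<le> ?n"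
    by (simp_all add: dom card_length)
  define V where "V = visited_after ?f ?n ?sources {}"
  have "orbit_closed ?f {}" by (simp add: orbit_closed_def)
  from psi_aux_realises[OF inj fin card this, of ?sources]
  have phase1: "realises_on ?f (psi_aux ?f ?n ?sources {}) V" "set ?sources \<subseteq> V"
    "orbit_closed ?f V"
    using dom ran by (auto simp: V_def)
  have "ran ?f - V \<subseteq> dom ?f"
    using ran_diff_subset_dom[OF inj fin phase1(3)] phase1(2) dom ran by auto
  with psi_aux_realises[OF inj fin card phase1(3), of ?rest]
  have phase2: "realises_on ?f (psi_aux ?f ?n ?rest V) (visited_after ?f ?n ?rest V - V)"
    "V \<union> set ?rest \<subseteq> visited_after ?f ?n ?rest V" "orbit_closed ?f (visited_after ?f ?n ?rest V)"
    "visited_after ?f ?n ?rest V \<subseteq> V \<union> set as \<union> set bs"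
    using dom by auto
  let ?W = "visited_after ?f ?n ?rest V"
  have "Psi as bs = psi_aux ?f ?n ?sources {} @ psi_aux ?f ?n ?rest V"
    unfolding Psi_def V_def by (rule psi_aux_append)
  moreover have "realises_on ?f (psi_aux ?f ?n ?sources {} @ psi_aux ?f ?n ?rest V) (V \<union> (?W - V))"
    using phase1(1) phase2(1) by (rule realises_on_append) auto
  moreover have "V \<union> (?W - V) = set as \<union> set bs"
  proof -
    have as: "set as \<subseteq> ?W" using phase1(2) phase2(2) by auto
    moreover have "set bs \<subseteq> ?W"
    proof
      fix b assume "b \<in> set bs"
      then obtain a where a: "?f a = Some b" using ran by (auto simp: ran_def)
      then have "a \<in> ?W" using as dom by auto
      then show "b \<in> ?W" using a phase2(3) by (auto simp: orbit_closed_def)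
    qed
    moreover have "V \<subseteq> set as \<union> set bs"
      using psi_aux_realises[OF inj fin card \<open>orbit_closed ?f {}\<close>, of ?sources] dom ran
      by (auto simp: V_def)
    ultimately show ?thesis using phase2(2,4) by auto
  qed
  ultimately show ?thesis by simp
qed

lemma perm_apply_Psi_nth:
  assumes "distinct as" "distinct bs" "length as = length bs" "i < length as"
  shows "perm_apply (Psi as bs) (as ! i) = bs ! i"
  using Psi_realises[OF assms(1-3)] map_of_zip_nth[OF assms(3,1), of i] assms(3,4)
  unfolding realises_on_def by auto

lemma perm_apply_Psi_fresh:
  assumes "distinct as" "distinct bs" "length as = length bs" "c \<notin> set as" "c \<notin> set bs"
  shows "perm_apply (Psi as bs) c = c"
  using Psi_realises[OF assms(1-3)] assms(4,5) unfolding realises_on_def by auto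

lemma perm_apply_Psi_mem:
  assumes "distinct as" "distinct bs" "length as = length bs" "set bs \<subseteq> B" "a \<in> set as"
  shows "perm_apply (Psi as bs) a \<in> B"
proof -
  obtain i where "i < length as" "a = as ! i" using assms(5) by (auto simp: in_set_conv_nth)
  then show ?thesis using perm_apply_Psi_nth[OF assms(1-3)] assms(3,4) by auto
qed

lemma perm_apply_Psi_moved:
  assumes "distinct as" "distinct bs" "length as = length bs" "set bs \<subseteq> B" "a \<notin> set as"
    and "perm_apply (Psi as bs) a \<noteq> a \<or> perm_apply (Psi as bs) a \<in> B"
  shows "a \<in> B"
  using assms perm_apply_Psi_fresh[OF assms(1-3)] by (cases "a \<in> set bs") auto

lemma susp_occs_to_nom:
  "meta_ok ar t \<Longrightarrow>
    susp_occs bs (to_nom \<Phi> t) = map (\<lambda>(Z, xs, B). (Psi (\<Phi> Z) xs, Z, B)) (meta_occs bs t)"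
proof (induction t arbitrary: bs)
  case (MMeta Z ts)
  then obtain as where "ts = map MVar as" by auto
  then show ?case by simp
next
  case (MTup ts)
  then have "map (\<lambda>s. susp_occs bs (to_nom \<Phi> s)) ts =
      map (\<lambda>s. map (\<lambda>(Z, xs, B). (Psi (\<Phi> Z) xs, Z, B)) (meta_occs bs s)) ts"
    by simp
  then show ?case
    by (simp only: to_nom.simps susp_occs.simps meta_occs.simps map_map comp_def map_concat)
qed auto

lemma atom_occs_to_nom:
  "(a, B) \<in> set (atom_occs bs (to_nom \<Phi> t)) \<Longrightarrow> set bs \<subseteq> set B \<and> (a \<in> set B \<or> a \<in> fvm t)"
  by (induction t arbitrary: bs) fastforce+

lemma meta_occs_args:
  "meta_ok ar t \<Longrightarrow> (Z, xs, B) \<in> set (meta_occs bs t) \<Longrightarrow>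
    set bs \<subseteq> set B \<and> distinct xs \<and> length xs = ar Z \<and> set xs \<subseteq> set B \<union> fvm t"
proof (induction t arbitrary: bs)
  case (MMeta Z' ts)
  then obtain as where "ts = map MVar as" "distinct as" "length as = ar Z'" by auto
  then show ?case using MMeta.prems(2) by (auto simp: comp_def)
qed fastforce+

lemma Phi_occurs:
  assumes "(Z, xs, B) \<in> set (meta_occs [] t)"
  obtains B0 where "(Z, Phi t Z, B0) \<in> set (meta_occs [] t)"
proof -
  obtain p where p: "find (\<lambda>(Z', _, _). Z' = Z) (meta_occs [] t) = Some p"
    using assms by (cases "find (\<lambda>(Z', _, _). Z' = Z) (meta_occs [] t)") (auto simp: find_None_iff)
  then obtain ys B0 where "p = (Z, ys, B0)" "(Z, ys, B0) \<in> set (meta_occs [] t)"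
    by (auto simp: find_Some_iff) (metis nth_mem)
  moreover have "Phi t Z = ys" using p calculation(1) by (simp add: Phi_def)
  ultimately show ?thesis using that by blast
qed

lemma crs_lhs_meta_args:
  assumes "crs_lhs ar t" "(Z, xs, B) \<in> set (meta_occs [] t)"
  shows "distinct xs \<and> length xs = ar Z \<and> set xs \<subseteq> set B"
  using assms meta_occs_args[of ar t Z xs B "[]"] by (auto simp: crs_lhs_def)

lemma Left_suspension_atoms:
  assumes lhs: "crs_lhs ar t" and Left: "Left t = (\<Delta>, t')"
    and occ: "(Z, xs, B) \<in> set (meta_occs [] t)"
  shows "a \<in> set (Phi t Z) \<Longrightarrow> perm_apply (Psi (Phi t Z) xs) a \<in> set B"
    and "a \<notin> set (Phi t Z) \<Longrightarrow>
      perm_apply (Psi (Phi t Z) xs) a \<noteq> a \<or> perm_apply (Psi (Phi t Z) xs) a \<in> set B \<Longrightarrow>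
      (a, Z) \<in> \<Delta>"
proof -
  obtain B0 where "(Z, Phi t Z, B0) \<in> set (meta_occs [] t)" using occ by (rule Phi_occurs)
  then have Phi: "distinct (Phi t Z)" "length (Phi t Z) = ar Z"
    using crs_lhs_meta_args[OF lhs] by blast+
  have xs: "distinct xs" "length xs = ar Z" "set xs \<subseteq> set B"
    using crs_lhs_meta_args[OF lhs occ] by blast+
  have len: "length (Phi t Z) = length xs" using Phi xs by simp
  show "a \<in> set (Phi t Z) \<Longrightarrow> perm_apply (Psi (Phi t Z) xs) a \<in> set B"
    using perm_apply_Psi_mem[OF Phi(1) xs(1) len xs(3)] .
  assume "a \<notin> set (Phi t Z)"
    "perm_apply (Psi (Phi t Z) xs) a \<noteq> a \<or> perm_apply (Psi (Phi t Z) xs) a \<in> set B"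
  then have "a \<in> set B" by (rule perm_apply_Psi_moved[OF Phi(1) xs(1) len xs(3)])
  then show "(a, Z) \<in> \<Delta>"
    using Left occ \<open>a \<notin> set (Phi t Z)\<close> unfolding Left_def by blast
qed

lemma Left_suspension_pair:
  assumes lhs: "crs_lhs ar t" and Left: "Left t = (\<Delta>, t')"
    and occ: "(Z, xs, B) \<in> set (meta_occs [] t)" "(Z, ys, C) \<in> set (meta_occs [] t)"
  shows "perm_apply (Psi (Phi t Z) xs) a \<in> set B \<Longrightarrow>
      perm_apply (Psi (Phi t Z) ys) a \<in> set C \<or> (a, Z) \<in> \<Delta>"
    and "perm_apply (Psi (Phi t Z) xs) a \<noteq> perm_apply (Psi (Phi t Z) ys) a \<Longrightarrow>
      perm_apply (Psi (Phi t Z) xs) a \<notin> set B \<or> perm_apply (Psi (Phi t Z) ys) a \<notin> set C \<Longrightarrow>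
      (a, Z) \<in> \<Delta>"
  using Left_suspension_atoms[OF lhs Left occ(1)] Left_suspension_atoms[OF lhs Left occ(2)]
  by (cases "a \<in> set (Phi t Z)"; metis)+

(* Barendregt's convention is not needed: closedness of t alone makes the arguments of every
   meta-variable occurrence bound above it. *)
theorem mainTheorem12:
  fixes t :: "('a, 'v, 'f) mterm" and ar :: "'v \<Rightarrow> nat"
    and \<Delta> :: "('a, 'v) fctx" and t' :: "('a, 'v, 'f) nterm"
  assumes "crs_lhs ar t"
    and "barendregt t"
    and "Left t = (\<Delta>, t')"
  shows "closed_nom \<Delta> t'"
proof -
  have t': "t' = to_nom (Phi t) t" using assms(3) by (simp add: Left_def)
  have "fvm t = {}" "meta_ok ar t" using assms(1) by (simp_all add: crs_lhs_def)
  then have atoms: "\<forall>(a, B) \<in> set (atom_occs [] t'). a \<in> set B"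
    using atom_occs_to_nom[of _ _ "[]" "Phi t" t] by (auto simp: t')
  have susp: "susp_occs [] t' = map (\<lambda>(Z, xs, B). (Psi (Phi t Z) xs, Z, B)) (meta_occs [] t)"
    unfolding t' using \<open>meta_ok ar t\<close> by (rule susp_occs_to_nom)
  show ?thesis
    unfolding closed_nom_def susp
    using atoms Left_suspension_pair[OF assms(1,3)] by fastforce
qed

end
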